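(* Let $R$ be a noetherian integral domain, $n\ge1$, $R[n]=R[t]/(t^n)$, and let $(x_1,\ldots,x_p)$ be a regular sequence in $R[n]$. Then the ideal $I$ of $R[n]$ generated by $x_1,\ldots,x_p$ is a balanced $R[n]$-module.
   Context: For an $R[n]$-module $M$ of finite type and $0\le i\le n$, let $M^{(i)}=\{m\in M: t^im=0\}$ (the second canonical filtration $0=M^{(0)}\subset M^{(1)}\subset\cdots\subset M^{(n)}=M$), and for $0<i\le n$ let $G^{(i)}(M)=M^{(i)}/M^{(i-1)}$, an $R$-module. For $1\le i\le n-1$, multiplication by $t$ induces an injective morphism of $R$-modules $\lambda_i:G^{(i+1)}(M)\to G^{(i)}(M)$. Set $\boldsymbol{\lambda}(M)=\lambda_1\circ\cdots\circ\lambda_{n-1}:G^{(n)}(M)\to G^{(1)}(M)$. $M$ is called balanced if $\boldsymbol{\lambda}(M)$ is surjective. *)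

theory Defs
  imports "HOL-Computational_Algebra.Polynomial"
begin

definition is_ideal :: "'a::comm_ring_1 set \<Rightarrow> bool" where
  "is_ideal I \<longleftrightarrow> 0 \<in> I \<and> (\<forall>x\<in>I. \<forall>y\<in>I. x + y \<in> I) \<and> (\<forall>r x. x \<in> I \<longrightarrow> r * x \<in> I)"

definition gen_ideal :: "'a::comm_ring_1 set \<Rightarrow> 'a set" where
  "gen_ideal S = {x. \<exists>F c. finite F \<and> F \<subseteq> S \<and> x = (\<Sum>s\<in>F. c s * s)}"

definition noetherian_ring :: "'a::comm_ring_1 itself \<Rightarrow> bool" where
  "noetherian_ring _ \<longleftrightarrow> (\<forall>I::'a set. is_ideal I \<longrightarrow> (\<exists>F. finite F \<and> I = gen_ideal F))"

text \<open>Elements of R[n] are represented by their unique representatives: polynomials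
  of degree < n (all coefficients at index \<ge> n vanish).\<close>

definition Rn :: "nat \<Rightarrow> 'a::comm_ring_1 poly set" where
  "Rn n = {p. \<forall>k\<ge>n. coeff p k = 0}"

definition rmult :: "nat \<Rightarrow> 'a::comm_ring_1 poly \<Rightarrow> 'a poly \<Rightarrow> 'a poly" where
  "rmult n p q = poly_cutoff n (p * q)"

definition Rn_ideal_gen :: "nat \<Rightarrow> 'a::comm_ring_1 poly list \<Rightarrow> 'a poly set" where
  "Rn_ideal_gen n xs = {m. \<exists>a. (\<forall>i<length xs. a i \<in> Rn n) \<and>
                              m = poly_cutoff n (\<Sum>i<length xs. a i * xs ! i)}"

definition Rn_regular_seq :: "nat \<Rightarrow> 'a::comm_ring_1 poly list \<Rightarrow> bool" where
  "Rn_regular_seq n xs \<longleftrightarrow> set xs \<subseteq> Rn n \<and>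
     (\<forall>i<length xs. \<forall>a\<in>Rn n. rmult n a (xs ! i) \<in> Rn_ideal_gen n (take i xs)
                               \<longrightarrow> a \<in> Rn_ideal_gen n (take i xs)) \<and>
     1 \<notin> Rn_ideal_gen n xs"

definition tvar :: "nat \<Rightarrow> 'a::comm_ring_1 poly" where
  "tvar n = poly_cutoff n [:0, 1:]"

definition filt :: "nat \<Rightarrow> 'a::comm_ring_1 poly set \<Rightarrow> nat \<Rightarrow> 'a poly set" where
  "filt n M i = {m \<in> M. poly_cutoff n ([:0, 1:] ^ i * m) = 0}"

text \<open>G^(i)(M) = M^(i)/M^(i-1), represented as the set of cosets.\<close>
definition coset :: "'a::ab_group_add set \<Rightarrow> 'a \<Rightarrow> 'a set" where
  "coset N m = {m + y | y. y \<in> N}"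

definition Gr :: "nat \<Rightarrow> 'a::comm_ring_1 poly set \<Rightarrow> nat \<Rightarrow> 'a poly set set" where
  "Gr n M i = coset (filt n M (i - 1)) ` filt n M i"

text \<open>\<lambda>_i : G^(i+1) \<rightarrow> G^(i), induced by multiplication by t
  (class of m \<mapsto> class of t*m; independent of the representative).\<close>
definition lam :: "nat \<Rightarrow> 'a::comm_ring_1 poly set \<Rightarrow> nat \<Rightarrow> 'a poly set \<Rightarrow> 'a poly set" where
  "lam n M i C = coset (filt n M (i - 1)) (rmult n (tvar n) (SOME m. m \<in> C))"

fun lam_comp :: "nat \<Rightarrow> 'a::comm_ring_1 poly set \<Rightarrow> nat \<Rightarrow> 'a poly set \<Rightarrow> 'a poly set" where
  "lam_comp n M 0 = id"
| "lam_comp n M (Suc k) = lam_comp n M k \<circ> lam n M (Suc k)"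

definition bold_lam :: "nat \<Rightarrow> 'a::comm_ring_1 poly set \<Rightarrow> 'a poly set \<Rightarrow> 'a poly set" where
  "bold_lam n M = lam_comp n M (n - 1)"

definition balanced :: "nat \<Rightarrow> 'a::comm_ring_1 poly set \<Rightarrow> bool" where
  "balanced n M \<longleftrightarrow> bold_lam n M ` Gr n M n = Gr n M 1"

end

theory Submission
  imports Defs
begin

(* Work in R[t], where R[n] = R[t]/(t^n) and I corresponds to J_p, with
   J_i = (x_1, ..., x_i, t^n).  Regularity gives, by induction on i, the colon identity
   (J_i : t^k) = J_i + (t^(n-k)) for k <= n: from t^k m = j + u x_i one gets
   (t^(n-k) u) x_i in J_(i-1), hence t^(n-k) u in J_(i-1), and two applications of the
   induction hypothesis finish the step.
   The composite lambda(I) is induced by multiplication with t^(n-1) from I to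
   I^(1) = {z in I. t z = 0}.  An element of I^(1) is z = t^(n-1) r with r in
   (J_p : t^(n-1)) = J_p + (t), so r = r' + t s with r' in J_p and z = t^(n-1) r' in R[n]. *)

abbreviation X :: "'a::comm_ring_1 poly" where "X \<equiv> [:0, 1:]"

lemma X_pow_eq_monom: "X ^ n = monom 1 n"
  by (simp add: monom_altdef)

lemma X_pow_dvd_iff: "X ^ n dvd p \<longleftrightarrow> (\<forall>k<n. coeff p k = 0)"
  by (simp add: X_pow_eq_monom monom_1_dvd_iff')

lemma X_pow_dvd_X_pow_mult_iff:
  assumes "k \<le> n"
  shows "X ^ n dvd X ^ k * p \<longleftrightarrow> X ^ (n - k) dvd p"
proof -
  have coeff_shift: "coeff (X ^ k * p) j = (if j < k then 0 else coeff p (j - k))" for j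
    by (simp add: X_pow_eq_monom coeff_monom_mult)
  have "(\<forall>j<n. coeff (X ^ k * p) j = 0) \<longleftrightarrow> (\<forall>j<n - k. coeff p j = 0)"
  proof (intro iffI allI impI)
    fix j assume "\<forall>j<n. coeff (X ^ k * p) j = 0" and "j < n - k"
    then have "coeff (X ^ k * p) (j + k) = 0"
      by simp
    then show "coeff p j = 0"
      by (simp add: coeff_shift)
  next
    fix j assume "\<forall>j<n - k. coeff p j = 0" and "j < n"
    then show "coeff (X ^ k * p) j = 0"
      by (simp add: coeff_shift)
  qed
  then show ?thesis
    by (simp add: X_pow_dvd_iff)
qed

lemma poly_cutoff_eq_iff_X_pow_dvd:
  "poly_cutoff n p = poly_cutoff n q \<longleftrightarrow> X ^ n dvd p - q"
  by (auto simp: X_pow_dvd_iff poly_eq_iff coeff_poly_cutoff)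

lemma poly_cutoff_eq_0_iff_X_pow_dvd: "poly_cutoff n p = 0 \<longleftrightarrow> X ^ n dvd p"
  using poly_cutoff_eq_iff_X_pow_dvd[of n p 0] by simp

lemma poly_cutoff_in_Rn: "poly_cutoff n p \<in> Rn n"
  by (simp add: Rn_def coeff_poly_cutoff)

lemma poly_cutoff_Rn: "p \<in> Rn n \<Longrightarrow> poly_cutoff n p = p"
  by (auto simp: Rn_def poly_eq_iff coeff_poly_cutoff)

lemma X_pow_dvd_diff_poly_cutoff: "X ^ n dvd p - poly_cutoff n p"
  using poly_cutoff_eq_iff_X_pow_dvd poly_cutoff_Rn[OF poly_cutoff_in_Rn] by metis

lemma poly_cutoff_add: "poly_cutoff n (p + q) = poly_cutoff n p + poly_cutoff n q"
  by (simp add: poly_eq_iff coeff_poly_cutoff)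

lemma poly_cutoff_mult_cutoff_left:
  fixes p q :: "'a::comm_ring_1 poly"
  shows "poly_cutoff n (poly_cutoff n p * q) = poly_cutoff n (p * q)"
proof -
  have "X ^ n dvd (p - poly_cutoff n p) * q"
    by (intro dvd_mult2 X_pow_dvd_diff_poly_cutoff)
  then have "poly_cutoff n (p * q) = poly_cutoff n (poly_cutoff n p * q)"
    by (simp add: poly_cutoff_eq_iff_X_pow_dvd left_diff_distrib)
  then show ?thesis ..
qed

lemma poly_cutoff_mult_cutoff_right:
  fixes p q :: "'a::comm_ring_1 poly"
  shows "poly_cutoff n (p * poly_cutoff n q) = poly_cutoff n (p * q)"
  using poly_cutoff_mult_cutoff_left[of n q p] by (simp add: mult.commute)

lemma rmult_tvar: "rmult n (tvar n) p = poly_cutoff n (X * p)"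
  by (simp add: rmult_def tvar_def poly_cutoff_mult_cutoff_left)

interpretation ring_module: module "(*) :: 'a::comm_ring_1 \<Rightarrow> 'a \<Rightarrow> 'a"
  by standard (simp_all add: algebra_simps)

(* Here scale_scale reads p * (q * r) = (p * q) * r and loops against mult.assoc. *)
declare ring_module.scale_scale [simp del]

definition lifted_ideal :: "nat \<Rightarrow> 'a::comm_ring_1 poly list \<Rightarrow> 'a poly set" where
  "lifted_ideal n ys = ring_module.span (insert (X ^ n) (set ys))"

lemma lifted_ideal_add:
  "p \<in> lifted_ideal n ys \<Longrightarrow> q \<in> lifted_ideal n ys \<Longrightarrow> p + q \<in> lifted_ideal n ys"
  unfolding lifted_ideal_def by (rule ring_module.span_add)

lemma lifted_ideal_diff:
  "p \<in> lifted_ideal n ys \<Longrightarrow> q \<in> lifted_ideal n ys \<Longrightarrow> p - q \<in> lifted_ideal n ys"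
  unfolding lifted_ideal_def by (rule ring_module.span_diff)

lemma lifted_ideal_mult: "q \<in> lifted_ideal n ys \<Longrightarrow> p * q \<in> lifted_ideal n ys"
  unfolding lifted_ideal_def by (rule ring_module.span_scale)

lemma lifted_ideal_mult_right: "p \<in> lifted_ideal n ys \<Longrightarrow> p * q \<in> lifted_ideal n ys"
  using lifted_ideal_mult[of p n ys q] by (simp add: mult.commute)

lemma lifted_ideal_X_pow_dvd:
  assumes "X ^ n dvd p"
  shows "p \<in> lifted_ideal n ys"
proof -
  obtain c where "p = X ^ n * c"
    using assms by (rule dvdE)
  then have "p = c * X ^ n"
    by (simp add: mult.commute)
  then show ?thesis
    unfolding lifted_ideal_def by (simp add: ring_module.span_base ring_module.span_scale)
qed

lemma lifted_ideal_X_pow_dvd_diff: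
  assumes "p \<in> lifted_ideal n ys" and "X ^ n dvd p - q"
  shows "q \<in> lifted_ideal n ys"
proof -
  have "p - (p - q) \<in> lifted_ideal n ys"
    using assms(1) lifted_ideal_X_pow_dvd[OF assms(2)] by (rule lifted_ideal_diff)
  then show ?thesis
    by simp
qed

lemma lifted_ideal_poly_cutoff_iff:
  "poly_cutoff n p \<in> lifted_ideal n ys \<longleftrightarrow> p \<in> lifted_ideal n ys"
proof -
  have "X ^ n dvd p - poly_cutoff n p"
    by (rule X_pow_dvd_diff_poly_cutoff)
  moreover from this have "X ^ n dvd poly_cutoff n p - p"
    by (metis dvd_minus_iff minus_diff_eq)
  ultimately show ?thesis
    using lifted_ideal_X_pow_dvd_diff by blast
qed

lemma lifted_ideal_Nil: "lifted_ideal n [] = {p. X ^ n dvd p}"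
  by (auto simp: lifted_ideal_def ring_module.span_singleton mult.commute)

lemma lifted_ideal_take_Suc:
  assumes "i < length xs"
  shows "lifted_ideal n (take (Suc i) xs)
    = {p. \<exists>u. p - u * xs ! i \<in> lifted_ideal n (take i xs)}"
proof -
  have "insert (X ^ n) (set (take (Suc i) xs))
      = insert (xs ! i) (insert (X ^ n) (set (take i xs)))"
    using assms by (auto simp: take_Suc_conv_app_nth)
  then show ?thesis
    by (simp add: lifted_ideal_def ring_module.span_insert)
qed

lemma lifted_ideal_sum_nth: "(\<Sum>i<length ys. a i * ys ! i) \<in> lifted_ideal n ys"
  unfolding lifted_ideal_def
  by (intro ring_module.span_sum ring_module.span_scale ring_module.span_base) simp

lemma lifted_ideal_obtain_sum_nth:
  assumes "p \<in> lifted_ideal n ys"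
  obtains a b where "p = (\<Sum>i<length ys. a i * ys ! i) + X ^ n * b"
proof -
  have "\<exists>a b. p = (\<Sum>i<length ys. a i * ys ! i) + X ^ n * b"
    using assms unfolding lifted_ideal_def
  proof (induction rule: ring_module.span_induct_alt)
    case base
    have "0 = (\<Sum>i<length ys. 0 * ys ! i) + X ^ n * (0 :: 'a poly)"
      by simp
    then show ?case
      by (intro exI)
  next
    case (step c x y)
    then obtain a b where y: "y = (\<Sum>i<length ys. a i * ys ! i) + X ^ n * b"
      by blast
    from step.hyps(1) consider "x = X ^ n" | j where "j < length ys" "x = ys ! j"
      by (auto simp: in_set_conv_nth)
    then show ?case
    proof cases
      case 1
      then have "c * x + y = (\<Sum>i<length ys. a i * ys ! i) + X ^ n * (b + c)"
        by (simp add: y algebra_simps)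
      then show ?thesis
        by (intro exI)
    next
      case (2 j)
      then have "c * x + y
          = (\<Sum>i<length ys. a i * ys ! i + (if i = j then c * ys ! i else 0)) + X ^ n * b"
        by (simp add: y sum.distrib)
      also have "\<dots> = (\<Sum>i<length ys. (a i + (if i = j then c else 0)) * ys ! i) + X ^ n * b"
        by (intro arg_cong2[where f = "(+)"] sum.cong) (auto simp: distrib_right)
      finally show ?thesis
        by (intro exI)
    qed
  qed
  then show ?thesis
    using that by blast
qed

lemma Rn_ideal_gen_eq: "Rn_ideal_gen n ys = Rn n \<inter> lifted_ideal n ys"
proof (intro equalityI subsetI)
  fix m assume "m \<in> Rn_ideal_gen n ys"
  then obtain a where "m = poly_cutoff n (\<Sum>i<length ys. a i * ys ! i)"
    by (auto simp: Rn_ideal_gen_def)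
  then show "m \<in> Rn n \<inter> lifted_ideal n ys"
    by (simp add: poly_cutoff_in_Rn lifted_ideal_poly_cutoff_iff lifted_ideal_sum_nth)
next
  fix m assume m: "m \<in> Rn n \<inter> lifted_ideal n ys"
  then obtain a b where ab: "m = (\<Sum>i<length ys. a i * ys ! i) + X ^ n * b"
    by (auto elim: lifted_ideal_obtain_sum_nth)
  have "X ^ n dvd m - (\<Sum>i<length ys. poly_cutoff n (a i) * ys ! i)"
  proof -
    have "m - (\<Sum>i<length ys. poly_cutoff n (a i) * ys ! i)
        = (\<Sum>i<length ys. (a i - poly_cutoff n (a i)) * ys ! i) + X ^ n * b"
      by (simp add: ab left_diff_distrib sum_subtractf)
    then show ?thesis
      by (simp add: X_pow_dvd_diff_poly_cutoff dvd_sum)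
  qed
  then have "m = poly_cutoff n (\<Sum>i<length ys. poly_cutoff n (a i) * ys ! i)"
    using m poly_cutoff_Rn[of m n] by (simp add: poly_cutoff_eq_iff_X_pow_dvd[symmetric])
  then show "m \<in> Rn_ideal_gen n ys"
    unfolding Rn_ideal_gen_def by (auto intro: poly_cutoff_in_Rn)
qed

lemma lifted_ideal_regular:
  assumes "Rn_regular_seq n xs" and "i < length xs"
    and "a * xs ! i \<in> lifted_ideal n (take i xs)"
  shows "a \<in> lifted_ideal n (take i xs)"
proof -
  have "rmult n (poly_cutoff n a) (xs ! i) = poly_cutoff n (a * xs ! i)"
    by (simp add: rmult_def poly_cutoff_mult_cutoff_left)
  with assms(3) have "rmult n (poly_cutoff n a) (xs ! i) \<in> Rn_ideal_gen n (take i xs)"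
    by (simp add: Rn_ideal_gen_eq poly_cutoff_in_Rn lifted_ideal_poly_cutoff_iff)
  with assms(1,2) have "poly_cutoff n a \<in> Rn_ideal_gen n (take i xs)"
    unfolding Rn_regular_seq_def using poly_cutoff_in_Rn by blast
  then show ?thesis
    by (simp add: Rn_ideal_gen_eq lifted_ideal_poly_cutoff_iff)
qed

lemma lifted_ideal_colon_X_pow:
  fixes xs :: "'a::comm_ring_1 poly list"
  assumes "Rn_regular_seq n xs" and "i \<le> length xs" and "k \<le> n"
    and "X ^ k * m \<in> lifted_ideal n (take i xs)"
  shows "\<exists>s. m - X ^ (n - k) * s \<in> lifted_ideal n (take i xs)"
  using assms(2-4)
proof (induction i arbitrary: k m)
  case 0
  then have "X ^ (n - k) dvd m"
    by (simp add: lifted_ideal_Nil X_pow_dvd_X_pow_mult_iff)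
  then obtain s where "m = X ^ (n - k) * s"
    by (rule dvdE)
  then have "m - X ^ (n - k) * s \<in> lifted_ideal n (take 0 xs)"
    by (simp add: lifted_ideal_Nil)
  then show ?case ..
next
  case (Suc i)
  let ?J = "lifted_ideal n (take i xs)"
  have i: "i < length xs"
    using Suc.prems(1) by simp
  obtain u where u: "X ^ k * m - u * xs ! i \<in> ?J"
    using Suc.prems(3) by (auto simp: lifted_ideal_take_Suc[OF i])
  have "X ^ n * m - X ^ (n - k) * (X ^ k * m - u * xs ! i) = (X ^ (n - k) * u) * xs ! i"
    using Suc.prems(2) by (simp add: algebra_simps flip: power_add)
  moreover have "X ^ n * m - X ^ (n - k) * (X ^ k * m - u * xs ! i) \<in> ?J"
    using lifted_ideal_diff[OF lifted_ideal_X_pow_dvd[OF dvd_triv_left] lifted_ideal_mult[OF u]] .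
  ultimately have "X ^ (n - k) * u \<in> ?J"
    using lifted_ideal_regular[OF assms(1) i] by simp
  then obtain s where s: "u - X ^ k * s \<in> ?J"
    using Suc.IH[of "n - k" u] i Suc.prems(2) by auto
  have "X ^ k * (m - s * xs ! i) = (X ^ k * m - u * xs ! i) + (u - X ^ k * s) * xs ! i"
    by (simp add: algebra_simps)
  also have "\<dots> \<in> ?J"
    by (rule lifted_ideal_add[OF u lifted_ideal_mult_right[OF s]])
  finally obtain s' where "m - s * xs ! i - X ^ (n - k) * s' \<in> ?J"
    using Suc.IH[of k] i Suc.prems(2) by auto
  then have "(m - X ^ (n - k) * s') - s * xs ! i \<in> ?J"
    by (simp only: diff_diff_eq add.commute)
  then have "m - X ^ (n - k) * s' \<in> lifted_ideal n (take (Suc i) xs)"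
    by (auto simp: lifted_ideal_take_Suc[OF i])
  then show ?case ..
qed

lemma coset_singleton_0: "coset {0} m = {m}"
  by (simp add: coset_def)

lemma coset_add_right:
  assumes add: "\<And>a b. a \<in> N \<Longrightarrow> b \<in> N \<Longrightarrow> a + b \<in> N"
    and uminus: "\<And>a. a \<in> N \<Longrightarrow> - a \<in> N"
    and "y \<in> N"
  shows "coset N (m + y) = coset N m"
proof (intro equalityI subsetI)
  fix x assume "x \<in> coset N (m + y)"
  then obtain z where "z \<in> N" "x = m + (y + z)"
    by (auto simp: coset_def add.assoc)
  then show "x \<in> coset N m"
    using add[OF \<open>y \<in> N\<close> \<open>z \<in> N\<close>] unfolding coset_def by blast
next
  fix x assume "x \<in> coset N m"
  then obtain z where "z \<in> N" "x = (m + y) + (- y + z)"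
    by (auto simp: coset_def)
  then show "x \<in> coset N (m + y)"
    using add[OF uminus[OF \<open>y \<in> N\<close>] \<open>z \<in> N\<close>] unfolding coset_def by blast
qed

lemma some_in_coset:
  assumes "0 \<in> N"
  obtains y where "y \<in> N" and "(SOME x. x \<in> coset N m) = m + y"
proof -
  have "m \<in> coset N m"
    using assms by (force simp: coset_def)
  then have "(SOME x. x \<in> coset N m) \<in> coset N m"
    by (rule someI)
  then show ?thesis
    using that by (auto simp: coset_def)
qed

lemma mem_filt_iff: "m \<in> filt n M k \<longleftrightarrow> m \<in> M \<and> X ^ n dvd X ^ k * m"
  by (simp add: filt_def poly_cutoff_eq_0_iff_X_pow_dvd)

definition Rn_submodule :: "nat \<Rightarrow> 'a::comm_ring_1 poly set \<Rightarrow> bool" where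
  "Rn_submodule n M \<longleftrightarrow> M \<subseteq> Rn n \<and> 0 \<in> M \<and> (\<forall>a\<in>M. \<forall>b\<in>M. a + b \<in> M)
     \<and> (\<forall>r. \<forall>a\<in>M. rmult n r a \<in> M)"

lemma Rn_ideal_gen_submodule: "Rn_submodule n (Rn_ideal_gen n ys)"
proof -
  have "0 \<in> Rn n" "0 \<in> lifted_ideal n ys"
    by (simp_all add: Rn_def lifted_ideal_X_pow_dvd)
  moreover have "a + b \<in> Rn n" if "a \<in> Rn n" "b \<in> Rn n" for a b :: "'a poly"
    using that by (simp add: Rn_def)
  ultimately show ?thesis
    unfolding Rn_submodule_def Rn_ideal_gen_eq rmult_def
    by (auto simp: poly_cutoff_in_Rn lifted_ideal_poly_cutoff_iff
        intro: lifted_ideal_add lifted_ideal_mult)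
qed

context
  fixes n :: nat and M :: "'a::comm_ring_1 poly set"
  assumes M: "Rn_submodule n M"
begin

lemma submodule_Rn: "m \<in> M \<Longrightarrow> m \<in> Rn n"
  using M by (auto simp: Rn_submodule_def)

lemma submodule_add: "a \<in> M \<Longrightarrow> b \<in> M \<Longrightarrow> a + b \<in> M"
  using M by (simp add: Rn_submodule_def)

lemma submodule_poly_cutoff_mult: "m \<in> M \<Longrightarrow> poly_cutoff n (r * m) \<in> M"
  using M by (simp add: Rn_submodule_def rmult_def)

lemma submodule_uminus:
  assumes "m \<in> M"
  shows "- m \<in> M"
proof -
  have "- m \<in> Rn n"
    using submodule_Rn[OF assms] by (simp add: Rn_def)
  then have "poly_cutoff n ((- 1) * m) = - m"
    by (simp add: poly_cutoff_Rn)
  then show ?thesis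
    using submodule_poly_cutoff_mult[OF assms] by metis
qed

lemma zero_in_filt: "0 \<in> filt n M k"
  using M by (simp add: mem_filt_iff Rn_submodule_def)

lemma filt_add: "a \<in> filt n M k \<Longrightarrow> b \<in> filt n M k \<Longrightarrow> a + b \<in> filt n M k"
  by (simp add: mem_filt_iff submodule_add distrib_left)

lemma filt_uminus: "a \<in> filt n M k \<Longrightarrow> - a \<in> filt n M k"
  by (simp add: mem_filt_iff submodule_uminus)

lemma filt_0: "filt n M 0 = {0}"
  using zero_in_filt by (auto simp: mem_filt_iff poly_cutoff_eq_0_iff_X_pow_dvd[symmetric]
      poly_cutoff_Rn submodule_Rn)

lemma filt_n: "filt n M n = M"
  by (auto simp: mem_filt_iff)

lemma X_mult_in_filt:
  assumes "m \<in> filt n M (Suc k)"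
  shows "poly_cutoff n (X * m) \<in> filt n M k"
proof -
  have "poly_cutoff n (X ^ k * poly_cutoff n (X * m)) = poly_cutoff n (X ^ Suc k * m)"
    by (simp only: poly_cutoff_mult_cutoff_right mult.assoc power_Suc2)
  also have "\<dots> = 0"
    using assms by (simp add: filt_def)
  finally have "poly_cutoff n (X ^ k * poly_cutoff n (X * m)) = 0" .
  moreover have "poly_cutoff n (X * m) \<in> M"
    using assms by (intro submodule_poly_cutoff_mult) (simp add: filt_def)
  ultimately show ?thesis
    unfolding filt_def by blast
qed

lemma lam_coset:
  assumes "m \<in> M"
  shows "lam n M (Suc k) (coset (filt n M (Suc k)) m)
    = coset (filt n M k) (poly_cutoff n (X * m))"
proof -
  obtain y where y: "y \<in> filt n M (Suc k)"
    and some: "(SOME x. x \<in> coset (filt n M (Suc k)) m) = m + y"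
    using some_in_coset zero_in_filt by blast
  have "lam n M (Suc k) (coset (filt n M (Suc k)) m)
      = coset (filt n M k) (poly_cutoff n (X * m) + poly_cutoff n (X * y))"
    unfolding lam_def some rmult_tvar distrib_left poly_cutoff_add diff_Suc_1 ..
  also have "\<dots> = coset (filt n M k) (poly_cutoff n (X * m))"
    using filt_add filt_uminus X_mult_in_filt[OF y] by (rule coset_add_right)
  finally show ?thesis .
qed

lemma lam_comp_coset:
  "m \<in> filt n M (Suc k)
    \<Longrightarrow> lam_comp n M k (coset (filt n M k) m) = {poly_cutoff n (X ^ k * m)}"
proof (induction k arbitrary: m)
  case 0
  then show ?case
    by (simp add: filt_0 coset_singleton_0 mem_filt_iff poly_cutoff_Rn submodule_Rn)
next
  case (Suc k)
  then have "m \<in> M"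
    by (simp add: mem_filt_iff)
  then have "lam_comp n M (Suc k) (coset (filt n M (Suc k)) m)
      = lam_comp n M k (coset (filt n M k) (poly_cutoff n (X * m)))"
    by (simp add: lam_coset)
  also have "\<dots> = {poly_cutoff n (X ^ k * poly_cutoff n (X * m))}"
    using Suc.prems by (intro Suc.IH X_mult_in_filt)
  also have "\<dots> = {poly_cutoff n (X ^ Suc k * m)}"
    by (simp add: poly_cutoff_mult_cutoff_right mult.assoc)
  finally show ?case .
qed

lemma balanced_iff_filt_1_subset:
  assumes "1 \<le> n"
  shows "balanced n M \<longleftrightarrow> filt n M 1 \<subseteq> (\<lambda>m. poly_cutoff n (X ^ (n - 1) * m)) ` M"
proof -
  let ?f = "\<lambda>m. poly_cutoff n (X ^ (n - 1) * m)"
  have n: "Suc (n - 1) = n"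
    using assms by simp
  have "bold_lam n M ` Gr n M n = (\<lambda>z. {z}) ` ?f ` M"
    unfolding Gr_def bold_lam_def image_image filt_n
    using lam_comp_coset[of _ "n - 1"] n filt_n by (intro image_cong) auto
  moreover have "Gr n M 1 = (\<lambda>z. {z}) ` filt n M 1"
    by (simp add: Gr_def filt_0 coset_singleton_0)
  ultimately have "balanced n M \<longleftrightarrow> ?f ` M = filt n M 1"
    unfolding balanced_def by (simp add: inj_image_eq_iff)
  moreover have "?f ` M \<subseteq> filt n M 1"
  proof
    fix z assume "z \<in> ?f ` M"
    then obtain m where "m \<in> M" "z = ?f m"
      by blast
    moreover have "poly_cutoff n (X ^ 1 * ?f m) = poly_cutoff n (X ^ n * m)"
      by (metis n poly_cutoff_mult_cutoff_right mult.assoc power_Suc power_one_right)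
    then have "poly_cutoff n (X ^ 1 * ?f m) = 0"
      by (simp add: poly_cutoff_eq_0_iff_X_pow_dvd)
    ultimately show "z \<in> filt n M 1"
      unfolding filt_def using submodule_poly_cutoff_mult by blast
  qed
  ultimately show ?thesis
    by blast
qed

end

lemma Rn_ideal_gen_filt_1_subset:
  fixes xs :: "'a::comm_ring_1 poly list"
  assumes "Rn_regular_seq n xs" and "1 \<le> n"
  shows "filt n (Rn_ideal_gen n xs) 1
    \<subseteq> (\<lambda>m. poly_cutoff n (X ^ (n - 1) * m)) ` Rn_ideal_gen n xs"
proof
  fix z assume z: "z \<in> filt n (Rn_ideal_gen n xs) 1"
  then have "z \<in> Rn n" and "z \<in> lifted_ideal n xs" and "X ^ n dvd X ^ 1 * z"
    unfolding mem_filt_iff Rn_ideal_gen_eq by blast+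
  then obtain r where r: "z = X ^ (n - 1) * r"
    using assms(2) by (auto simp only: X_pow_dvd_X_pow_mult_iff)
  with \<open>z \<in> lifted_ideal n xs\<close> obtain s where s: "r - X ^ 1 * s \<in> lifted_ideal n xs"
    using lifted_ideal_colon_X_pow[OF assms(1) order_refl, of "n - 1" r] assms(2) by auto
  define m where "m = poly_cutoff n (r - X ^ 1 * s)"
  have "m \<in> Rn_ideal_gen n xs"
    using s by (simp add: m_def Rn_ideal_gen_eq poly_cutoff_in_Rn lifted_ideal_poly_cutoff_iff)
  moreover have "poly_cutoff n (X ^ (n - 1) * m) = z"
  proof -
    have X_pow: "X ^ (n - 1) * X ^ 1 = X ^ n"
      using assms(2) by (metis le_add_diff_inverse2 power_add)
    have "X ^ (n - 1) * (r - X ^ 1 * s) = z - X ^ n * s"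
      by (simp only: r right_diff_distrib mult.assoc[symmetric] X_pow)
    then have "poly_cutoff n (X ^ (n - 1) * m) = poly_cutoff n (z - X ^ n * s)"
      by (simp add: m_def poly_cutoff_mult_cutoff_right)
    also have "\<dots> = z"
      using \<open>z \<in> Rn n\<close>
      by (simp add: poly_cutoff_eq_iff_X_pow_dvd[of n _ z, THEN iffD2] poly_cutoff_Rn)
    finally show ?thesis .
  qed
  ultimately show "z \<in> (\<lambda>m. poly_cutoff n (X ^ (n - 1) * m)) ` Rn_ideal_gen n xs"
    by (rule rev_image_eqI[OF _ sym])
qed

theorem proposition3p7p2:
  fixes xs :: "'a::idom poly list" and n :: nat
  assumes "noetherian_ring TYPE('a)"
    and "n \<ge> 1"
    and "Rn_regular_seq n xs"
  shows "balanced n (Rn_ideal_gen n xs)"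
  using balanced_iff_filt_1_subset[OF Rn_ideal_gen_submodule assms(2)]
    Rn_ideal_gen_filt_1_subset[OF assms(3,2)] by blast

end
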